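(* Let $E$ be a separable real Hilbert space with $\dim E\geq 2$ and let $1<p<\infty$. For a measure $\mu\in\mathcal{W}_p(E)$ the following are equivalent: (i) $\mu$ is a Dirac measure; (ii) every geodesic segment $\gamma\colon[0,T]\to\mathcal{W}_p(E)$ ($T>0$) with $\gamma(0)=\mu$ can be extended to a geodesic ray $\widetilde\gamma\colon[0,\infty)\to\mathcal{W}_p(E)$ (i.e. $\widetilde\gamma|_{[0,T]}=\gamma$).
   Context: For a complete separable metric space $(X,\rho)$ and $0<p<\infty$, $\mathcal{W}_p(X)$ is the set of Borel probability measures $\mu$ on $X$ with $\int_X\rho(x,\hat x)^p\,d\mu(x)<\infty$ for some (hence all) $\hat x\in X$, equipped with the $p$-Wasserstein distance $d_{\mathcal{W}_p}(\mu,\nu)=\big(\inf_{\pi\in\Pi(\mu,\nu)}\int_{X\times X}\rho(x,y)^p\,d\pi(x,y)\big)^{\min\{1/p,1\}}$, where $\Pi(\mu,\nu)$ is the set of Borel probability measures on $X\times X$ with marginals $\mu$ and $\nu$. On a Hilbert space $E$ the metric is $\rho(x,y)=\|x-y\|$. A geodesic is a map $\gamma\colon I\to\mathcal{W}_p(E)$, $I\subseteq\mathbb{R}$ a closed interval, with $d_{\mathcal{W}_p}(\gamma(s),\gamma(t))=|s-t|$ for all $s,t\in I$; it is a geodesic segment if $I=[0,T]$ for some $T>0$ and a geodesic ray if $I=[0,\infty)$. *)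

theory Defs
  imports "HOL-Probability.Probability"
begin

text \<open>Borel probability measures on a metric space X with finite p-th moment
  (moment taken about the base point 0; for a normed space this is equivalent
  to "for some / all base points").\<close>
definition wasserstein_space :: "real \<Rightarrow> ('a::real_normed_vector) measure set" where
  "wasserstein_space p =
     {\<mu>. prob_space \<mu> \<and> sets \<mu> = sets borel \<and>
          (\<integral>\<^sup>+ x. ennreal (norm x powr p) \<partial>\<mu>) < \<infinity>}"

definition couplings :: "'a::topological_space measure \<Rightarrow> 'a measure \<Rightarrow> ('a \<times> 'a) measure set" where
  "couplings \<mu> \<nu> =
     {\<pi>. prob_space \<pi> \<and> sets \<pi> = sets (borel :: ('a \<times> 'a) measure) \<and>
          distr \<pi> borel fst = \<mu> \<and> distr \<pi> borel snd = \<nu>}"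

definition wasserstein_dist :: "real \<Rightarrow> 'a::metric_space measure \<Rightarrow> 'a measure \<Rightarrow> real" where
  "wasserstein_dist p \<mu> \<nu> =
     enn2real (INF \<pi>\<in>couplings \<mu> \<nu>. \<integral>\<^sup>+ z. ennreal (dist (fst z) (snd z) powr p) \<partial>\<pi>)
       powr (min (1 / p) 1)"

definition wgeodesic :: "real \<Rightarrow> real set \<Rightarrow> (real \<Rightarrow> ('a::real_normed_vector) measure) \<Rightarrow> bool" where
  "wgeodesic p I \<gamma> \<longleftrightarrow>
     (\<forall>t\<in>I. \<gamma> t \<in> wasserstein_space p) \<and>
     (\<forall>s\<in>I. \<forall>t\<in>I. wasserstein_dist p (\<gamma> s) (\<gamma> t) = \<bar>s - t\<bar>)"

end

theory Submission
  imports Defs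
begin

(* If mu = delta_x, then W_p(delta_x, rho)^p is the p-th moment of rho about x, so gamma s has
   moment s^p, and the segment is prolonged beyond T by dilating gamma T about x by the factor t/T.
   The distances along the prolongation are bounded below by the reverse Minkowski inequality for
   moments about x, and above by pushing couplings of gamma s and gamma T through the dilation.

   If mu is not a Dirac measure, some hyperplane through a point x0 has mu-mass on both of its
   open sides. Contracting mu towards x0 is a geodesic that reaches delta_x0 at time
   T = W_p(delta_x0, mu). A ray extending it would provide nu with W_p(delta_x0, nu) = T and
   W_p(mu, nu) = 2T. Then the product coupling of mu and nu is optimal, which forces equality in
   |x - y|^p <= 2^(p-1) (|x - x0|^p + |y - x0|^p) almost everywhere; hence for some y /= x0 almost
   every x - x0 is a nonnegative multiple of x0 - y, and mu lives on one side of the hyperplane. *)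

section \<open>Elementary inequalities\<close>

lemma powr_add_le_weighted:
  fixes u v l p :: real
  assumes u: "0 \<le> u" and v: "0 \<le> v" and l: "0 < l" "l < 1" and p: "1 \<le> p"
  shows "(u + v) powr p \<le> l powr (1 - p) * u powr p + (1 - l) powr (1 - p) * v powr p"
proof (cases "u = 0 \<or> v = 0")
  case True
  have "1 \<le> l powr (1 - p)" "1 \<le> (1 - l) powr (1 - p)"
    using l p powr_mono'[of "1 - p" 0 l] powr_mono'[of "1 - p" 0 "1 - l"] by auto
  with True u v show ?thesis
    by (auto simp: mult_le_cancel_right1)
next
  case False
  with u v have uv: "0 < u" "0 < v" by auto
  have "((1 - (1 - l)) *\<^sub>R (u / l) + (1 - l) *\<^sub>R (v / (1 - l))) powr p
      \<le> (1 - (1 - l)) * (u / l) powr p + (1 - l) * (v / (1 - l)) powr p"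
    using convex_onD[OF powr_convex[OF p], of "1 - l" "u / l" "v / (1 - l)"] l uv by simp
  also have "(1 - (1 - l)) *\<^sub>R (u / l) + (1 - l) *\<^sub>R (v / (1 - l)) = u + v"
    using l by simp
  also have "(1 - (1 - l)) * (u / l) powr p = l powr (1 - p) * u powr p"
    using l uv by (simp add: powr_divide powr_diff field_simps)
  also have "(1 - l) * (v / (1 - l)) powr p = (1 - l) powr (1 - p) * v powr p"
    using l uv by (simp add: powr_divide powr_diff field_simps)
  finally show ?thesis .
qed

lemma powr_add_le_two_powr:
  fixes u v p :: real
  assumes "0 \<le> u" "0 \<le> v" "1 \<le> p"
  shows "(u + v) powr p \<le> 2 powr (p - 1) * (u powr p + v powr p)"
proof -
  have "(1 / 2 :: real) powr (1 - p) = 2 powr (p - 1)"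
    by (simp add: powr_divide powr_minus_divide[symmetric] powr_diff)
  then show ?thesis
    using powr_add_le_weighted[of u v "1 / 2" p] assms by (simp add: algebra_simps)
qed

lemma powr_weighted_sum_eq:
  fixes A B p :: real
  assumes "0 < A" "0 < B"
  shows "(A / (A + B)) powr (1 - p) * A powr p + (1 - A / (A + B)) powr (1 - p) * B powr p
    = (A + B) powr p"
proof -
  have weight: "(a / (A + B)) powr (1 - p) * a powr p = a * (A + B) powr (p - 1)" if "0 < a" for a
  proof -
    have "(a / (A + B)) powr (1 - p) * a powr p = (a powr (1 - p) * a powr p) / (A + B) powr (1 - p)"
      using that assms by (simp add: powr_divide)
    also have "a powr (1 - p) * a powr p = a"
      using that by (simp add: powr_add[symmetric])
    also have "(A + B) powr (1 - p) = inverse ((A + B) powr (p - 1))"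
      using powr_minus[of "A + B" "p - 1"] by simp
    finally show ?thesis by (simp add: divide_inverse)
  qed
  have "1 - A / (A + B) = B / (A + B)"
    using assms by (simp add: field_simps)
  then have "(A / (A + B)) powr (1 - p) * A powr p + (1 - A / (A + B)) powr (1 - p) * B powr p
      = (A + B) * (A + B) powr (p - 1)"
    by (simp only: weight assms) (simp add: algebra_simps)
  also have "\<dots> = (A + B) powr p"
    using powr_mult_base[of "A + B" "p - 1"] assms by simp
  finally show ?thesis .
qed

lemma powr_le_imp_le_base:
  fixes a b p :: real
  assumes "0 < p" "0 \<le> b" "a powr p \<le> b powr p"
  shows "a \<le> b"
  using assms powr_less_mono2[of p b a] by force

lemma ennreal_obtain_powr:
  fixes I :: ennreal
  assumes "I < \<infinity>" "0 < p"
  obtains G where "0 \<le> G" "I = ennreal (G powr p)"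
proof -
  define r where "r = enn2real I"
  have "I = ennreal r" "0 \<le> r"
    using assms by (auto simp: r_def ennreal_enn2real_if)
  moreover have "(r powr (1 / p)) powr p = r"
    using assms \<open>0 \<le> r\<close> by (simp add: powr_powr)
  ultimately show ?thesis
    using that[of "r powr (1 / p)"] by simp
qed

lemma ennreal_le_powr_if_le_add:
  fixes X :: ennreal
  assumes p: "0 < p" and a: "0 \<le> a" and le: "\<And>e. 0 < e \<Longrightarrow> X \<le> ennreal ((a + e) powr p)"
  shows "X \<le> ennreal (a powr p)"
proof -
  have "X < \<infinity>"
    using le[of 1] order.strict_trans1 by fastforce
  with p obtain q where q: "0 \<le> q" "X = ennreal (q powr p)"
    using ennreal_obtain_powr by metis
  have "q \<le> a"
  proof (rule field_le_epsilon)
    fix e :: real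
    assume e: "0 < e"
    then have "q powr p \<le> (a + e) powr p"
      using le[OF e] q by simp
    then show "q \<le> a + e"
      using p a e powr_le_imp_le_base[of p "a + e" q] by simp
  qed
  then show ?thesis
    unfolding q(2) using q(1) p by (intro ennreal_leI powr_mono2) simp_all
qed

lemma two_powr_mult_add:
  fixes T p :: real
  assumes "0 \<le> T"
  shows "2 powr (p - 1) * (T powr p + T powr p) = (2 * T) powr p"
proof -
  have two: "2 powr (p - 1) * 2 = (2::real) powr p"
    using powr_mult_base[of 2 "p - 1"] by (simp add: mult.commute)
  show ?thesis
    using assms by (simp add: powr_mult flip: two)
qed

lemma AE_eq_0_if_nn_integral_powr_eq_0:
  fixes f :: "'b \<Rightarrow> real"
  assumes "f \<in> borel_measurable M" "(\<integral>\<^sup>+x. ennreal (f x powr p) \<partial>M) = 0"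
  shows "AE x in M. f x = 0"
proof -
  have "AE x in M. ennreal (f x powr p) = 0"
    using assms by (subst (asm) nn_integral_0_iff_AE) auto
  then show ?thesis
    by eventually_elim (simp add: ennreal_eq_0_iff)
qed

lemma nn_integral_powr_add_eq_if_nn_integral_powr_eq_0:
  fixes f g :: "'b \<Rightarrow> real"
  assumes "f \<in> borel_measurable M" "(\<integral>\<^sup>+x. ennreal (f x powr p) \<partial>M) = 0"
  shows "(\<integral>\<^sup>+x. ennreal ((f x + g x) powr p) \<partial>M) = (\<integral>\<^sup>+x. ennreal (g x powr p) \<partial>M)"
  using AE_eq_0_if_nn_integral_powr_eq_0[OF assms] by (intro nn_integral_cong_AE) auto

lemma nn_integral_powr_add_le:
  fixes f g :: "'b \<Rightarrow> real"
  assumes p: "1 \<le> p" and f: "f \<in> borel_measurable M" and g: "g \<in> borel_measurable M"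
    and f0: "\<And>x. 0 \<le> f x" and g0: "\<And>x. 0 \<le> g x" and A: "0 \<le> A" and B: "0 \<le> B"
    and fA: "(\<integral>\<^sup>+x. ennreal (f x powr p) \<partial>M) = ennreal (A powr p)"
    and gB: "(\<integral>\<^sup>+x. ennreal (g x powr p) \<partial>M) = ennreal (B powr p)"
  shows "(\<integral>\<^sup>+x. ennreal ((f x + g x) powr p) \<partial>M) \<le> ennreal ((A + B) powr p)"
proof (cases "A = 0 \<or> B = 0")
  case True
  then show ?thesis
  proof
    assume "A = 0"
    then show ?thesis
      using nn_integral_powr_add_eq_if_nn_integral_powr_eq_0[OF f, of p g] fA gB by simp
  next
    assume "B = 0"
    then show ?thesis
      using nn_integral_powr_add_eq_if_nn_integral_powr_eq_0[OF g, of p f] fA gB by (simp add: add.commute)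
  qed
next
  case False
  with A B have AB: "0 < A" "0 < B" by auto
  define l where "l = A / (A + B)"
  have l: "0 < l" "l < 1"
    using AB by (auto simp: l_def field_simps)
  \<comment> \<open>the weight \<open>l = A / (A + B)\<close> makes the convexity bound integrate to exactly \<open>(A + B)\<^sup>p\<close>\<close>
  have "(\<integral>\<^sup>+x. ennreal ((f x + g x) powr p) \<partial>M)
      \<le> (\<integral>\<^sup>+x. ennreal (l powr (1 - p)) * ennreal (f x powr p)
               + ennreal ((1 - l) powr (1 - p)) * ennreal (g x powr p) \<partial>M)"
    using powr_add_le_weighted[OF f0 g0 l p]
    by (intro nn_integral_mono) (simp add: ennreal_mult[symmetric] ennreal_plus[symmetric] del: ennreal_plus)
  also have "\<dots> = ennreal (l powr (1 - p)) * (\<integral>\<^sup>+x. ennreal (f x powr p) \<partial>M)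
      + ennreal ((1 - l) powr (1 - p)) * (\<integral>\<^sup>+x. ennreal (g x powr p) \<partial>M)"
    using f g by (simp add: nn_integral_add nn_integral_cmult)
  also have "\<dots> = ennreal (l powr (1 - p) * A powr p + (1 - l) powr (1 - p) * B powr p)"
    by (simp add: fA gB ennreal_mult[symmetric] ennreal_plus[symmetric] del: ennreal_plus)
  also have "\<dots> = ennreal ((A + B) powr p)"
    using powr_weighted_sum_eq[OF AB, of p] by (simp add: l_def)
  finally show ?thesis .
qed

section \<open>Couplings and transport costs\<close>

definition coupling_cost :: "real \<Rightarrow> ('a::metric_space \<times> 'a) measure \<Rightarrow> ennreal" where
  "coupling_cost p \<pi> = (\<integral>\<^sup>+z. ennreal (dist (fst z) (snd z) powr p) \<partial>\<pi>)"

definition optimal_cost :: "real \<Rightarrow> 'a::metric_space measure \<Rightarrow> 'a measure \<Rightarrow> ennreal" where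
  "optimal_cost p \<mu> \<nu> = (INF \<pi>\<in>couplings \<mu> \<nu>. coupling_cost p \<pi>)"

definition moment :: "real \<Rightarrow> 'a::metric_space \<Rightarrow> 'a measure \<Rightarrow> ennreal" where
  "moment p x \<rho> = (\<integral>\<^sup>+y. ennreal (dist x y powr p) \<partial>\<rho>)"

lemma couplingsD:
  assumes "\<pi> \<in> couplings \<mu> \<nu>"
  shows "prob_space \<pi>" "sets \<pi> = sets borel" "distr \<pi> borel fst = \<mu>" "distr \<pi> borel snd = \<nu>"
  using assms by (auto simp: couplings_def)

lemma wasserstein_spaceD:
  assumes "\<rho> \<in> wasserstein_space p"
  shows "prob_space \<rho>" "sets \<rho> = sets borel"
  using assms by (auto simp: wasserstein_space_def)

lemma measurable_fst_borel [measurable]: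
  "(fst :: 'a::second_countable_topology \<times> 'b::second_countable_topology \<Rightarrow> 'a) \<in> borel_measurable borel"
  unfolding borel_prod[symmetric] by simp

lemma measurable_snd_borel [measurable]:
  "(snd :: 'a::second_countable_topology \<times> 'b::second_countable_topology \<Rightarrow> 'b) \<in> borel_measurable borel"
  unfolding borel_prod[symmetric] by simp

lemma borel_measurable_sets_borel:
  "sets M = sets borel \<Longrightarrow> f \<in> borel_measurable borel \<Longrightarrow> f \<in> borel_measurable M"
  by (simp cong: measurable_cong_sets)

lemma nn_integral_coupling_fst:
  fixes \<mu> \<nu> :: "'a::second_countable_topology measure"
  assumes \<pi>: "\<pi> \<in> couplings \<mu> \<nu>" and f: "f \<in> borel_measurable borel"
  shows "(\<integral>\<^sup>+z. f (fst z) \<partial>\<pi>) = (\<integral>\<^sup>+x. f x \<partial>\<mu>)"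
proof -
  have "(\<integral>\<^sup>+x. f x \<partial>(distr \<pi> borel fst)) = (\<integral>\<^sup>+z. f (fst z) \<partial>\<pi>)"
    using f by (intro nn_integral_distr) (simp_all add: borel_measurable_sets_borel[OF couplingsD(2)[OF \<pi>]])
  then show ?thesis
    by (simp add: couplingsD(3)[OF \<pi>])
qed

lemma nn_integral_coupling_snd:
  fixes \<mu> \<nu> :: "'a::second_countable_topology measure"
  assumes \<pi>: "\<pi> \<in> couplings \<mu> \<nu>" and f: "f \<in> borel_measurable borel"
  shows "(\<integral>\<^sup>+z. f (snd z) \<partial>\<pi>) = (\<integral>\<^sup>+y. f y \<partial>\<nu>)"
proof -
  have "(\<integral>\<^sup>+y. f y \<partial>(distr \<pi> borel snd)) = (\<integral>\<^sup>+z. f (snd z) \<partial>\<pi>)"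
    using f by (intro nn_integral_distr) (simp_all add: borel_measurable_sets_borel[OF couplingsD(2)[OF \<pi>]])
  then show ?thesis
    by (simp add: couplingsD(4)[OF \<pi>])
qed

lemma distr_Pair_in_couplings:
  fixes f g :: "'b \<Rightarrow> 'a::second_countable_topology"
  assumes M: "prob_space M" and f: "f \<in> borel_measurable M" and g: "g \<in> borel_measurable M"
  shows "distr M borel (\<lambda>y. (f y, g y)) \<in> couplings (distr M borel f) (distr M borel g)"
proof -
  have h: "(\<lambda>y. (f y, g y)) \<in> borel_measurable M"
    using f g by measurable
  show ?thesis
    unfolding couplings_def
    using prob_space.prob_space_distr[OF M h]
      distr_distr[OF measurable_fst_borel h] distr_distr[OF measurable_snd_borel h]
    by (simp add: comp_def)
qed

lemma coupling_cost_distr_Pair: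
  fixes f g :: "'b \<Rightarrow> 'a::{metric_space, second_countable_topology}"
  assumes "f \<in> borel_measurable M" "g \<in> borel_measurable M"
  shows "coupling_cost p (distr M borel (\<lambda>y. (f y, g y)))
    = (\<integral>\<^sup>+y. ennreal (dist (f y) (g y) powr p) \<partial>M)"
  unfolding coupling_cost_def using assms by (subst nn_integral_distr) simp_all

lemma couplings_distr_map_prod:
  fixes f g :: "'a::second_countable_topology \<Rightarrow> 'b::second_countable_topology"
  assumes \<pi>: "\<pi> \<in> couplings \<mu> \<nu>"
    and f: "f \<in> borel_measurable borel" and g: "g \<in> borel_measurable borel"
  shows "distr \<pi> borel (\<lambda>z. (f (fst z), g (snd z))) \<in> couplings (distr \<mu> borel f) (distr \<nu> borel g)"
proof -
  note \<pi>D = couplingsD[OF \<pi>]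
  have fst: "fst \<in> borel_measurable \<pi>" and snd: "snd \<in> borel_measurable \<pi>"
    by (simp_all add: borel_measurable_sets_borel[OF \<pi>D(2)])
  have "distr \<pi> borel (\<lambda>z. f (fst z)) = distr \<mu> borel f"
    using distr_distr[OF f fst] by (simp add: \<pi>D(3) comp_def)
  moreover have "distr \<pi> borel (\<lambda>z. g (snd z)) = distr \<nu> borel g"
    using distr_distr[OF g snd] by (simp add: \<pi>D(4) comp_def)
  moreover have "distr \<pi> borel (\<lambda>z. (f (fst z), g (snd z)))
      \<in> couplings (distr \<pi> borel (\<lambda>z. f (fst z))) (distr \<pi> borel (\<lambda>z. g (snd z)))"
    by (intro distr_Pair_in_couplings[OF \<pi>D(1)] measurable_compose[OF fst f] measurable_compose[OF snd g])
  ultimately show ?thesis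
    by simp
qed
lemma couplings_swap:
  fixes \<mu> \<nu> :: "'a::second_countable_topology measure"
  assumes \<pi>: "\<pi> \<in> couplings \<mu> \<nu>"
  shows "distr \<pi> borel (\<lambda>z. (snd z, fst z)) \<in> couplings \<nu> \<mu>"
  using distr_Pair_in_couplings[OF couplingsD(1)[OF \<pi>], of snd fst]
  by (simp add: couplingsD[OF \<pi>] borel_measurable_sets_borel)

lemma coupling_cost_swap:
  fixes \<pi> :: "('a::{metric_space, second_countable_topology} \<times> 'a) measure"
  assumes "sets \<pi> = sets borel"
  shows "coupling_cost p (distr \<pi> borel (\<lambda>z. (snd z, fst z))) = coupling_cost p \<pi>"
  using assms
  by (simp add: coupling_cost_distr_Pair borel_measurable_sets_borel dist_commute)
     (simp add: coupling_cost_def)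

lemma optimal_cost_commute:
  fixes \<mu> \<nu> :: "'a::{metric_space, second_countable_topology} measure"
  shows "optimal_cost p \<nu> \<mu> = optimal_cost p \<mu> \<nu>"
proof -
  have le: "optimal_cost p \<nu> \<mu> \<le> optimal_cost p \<mu> \<nu>" for \<mu> \<nu> :: "'a measure"
    unfolding optimal_cost_def
  proof (rule INF_greatest)
    fix \<pi> assume \<pi>: "\<pi> \<in> couplings \<mu> \<nu>"
    have "(INF \<pi>\<in>couplings \<nu> \<mu>. coupling_cost p \<pi>) \<le> coupling_cost p (distr \<pi> borel (\<lambda>z. (snd z, fst z)))"
      using couplings_swap[OF \<pi>] by (rule INF_lower)
    then show "(INF \<pi>\<in>couplings \<nu> \<mu>. coupling_cost p \<pi>) \<le> coupling_cost p \<pi>"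
      by (simp add: coupling_cost_swap couplingsD(2)[OF \<pi>])
  qed
  show ?thesis
    by (intro antisym le)
qed

lemma wasserstein_dist_optimal_cost:
  "wasserstein_dist p \<mu> \<nu> = enn2real (optimal_cost p \<mu> \<nu>) powr min (1 / p) 1"
  by (simp add: wasserstein_dist_def optimal_cost_def coupling_cost_def)

lemma wasserstein_dist_commute:
  fixes \<mu> \<nu> :: "'a::{metric_space, second_countable_topology} measure"
  shows "wasserstein_dist p \<nu> \<mu> = wasserstein_dist p \<mu> \<nu>"
  by (simp add: wasserstein_dist_optimal_cost optimal_cost_commute)

lemma return_couplings:
  fixes \<nu> :: "'a::second_countable_topology measure"
  assumes "prob_space \<nu>" "sets \<nu> = sets borel"
  shows "distr \<nu> borel (\<lambda>y. (x, y)) \<in> couplings (return borel x) \<nu>"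
  using distr_Pair_in_couplings[OF assms(1), of "\<lambda>_. x" "\<lambda>y. y"] assms
  by (simp add: prob_space.distr_const distr_id2)

lemma coupling_cost_return:
  fixes \<nu> :: "'a::{metric_space, second_countable_topology} measure"
  assumes \<pi>: "\<pi> \<in> couplings (return borel x) \<nu>"
  shows "coupling_cost p \<pi> = moment p x \<nu>"
proof -
  note \<pi>D = couplingsD[OF \<pi>]
  have fst: "fst \<in> borel_measurable \<pi>"
    by (simp add: borel_measurable_sets_borel[OF \<pi>D(2)])
  have "emeasure \<pi> (fst -` {x} \<inter> space \<pi>) = emeasure (distr \<pi> borel fst) {x}"
    by (subst emeasure_distr[OF fst]) auto
  then have "measure \<pi> (fst -` {x} \<inter> space \<pi>) = 1"
    by (simp add: \<pi>D(3) measure_def)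
  then have "AE z in \<pi>. fst z = x"
    using prob_space.AE_prob_1[OF \<pi>D(1)] by fastforce
  then have "coupling_cost p \<pi> = (\<integral>\<^sup>+z. ennreal (dist x (snd z) powr p) \<partial>\<pi>)"
    unfolding coupling_cost_def by (intro nn_integral_cong_AE) auto
  also have "\<dots> = moment p x \<nu>"
    unfolding moment_def by (rule nn_integral_coupling_snd[OF \<pi>]) measurable
  finally show ?thesis .
qed

lemma optimal_cost_return:
  fixes \<nu> :: "'a::{metric_space, second_countable_topology} measure"
  assumes "prob_space \<nu>" "sets \<nu> = sets borel"
  shows "optimal_cost p (return borel x) \<nu> = moment p x \<nu>"
proof -
  have "optimal_cost p (return borel x) \<nu> = (INF \<pi>\<in>couplings (return borel x) \<nu>. moment p x \<nu>)"
    unfolding optimal_cost_def using coupling_cost_return by (intro INF_cong) auto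
  also have "\<dots> = moment p x \<nu>"
    using return_couplings[OF assms, of x] by (intro INF_const) blast
  finally show ?thesis .
qed

lemma pair_measure_in_couplings:
  fixes \<mu> \<nu> :: "'a::second_countable_topology measure"
  assumes \<mu>: "prob_space \<mu>" "sets \<mu> = sets borel" and \<nu>: "prob_space \<nu>" "sets \<nu> = sets borel"
  shows "\<mu> \<Otimes>\<^sub>M \<nu> \<in> couplings \<mu> \<nu>"
proof -
  interpret P: pair_prob_space \<mu> \<nu>
    using \<mu> \<nu> by (simp add: pair_prob_space_def pair_sigma_finite_def prob_space_imp_sigma_finite)
  have sets: "sets (\<mu> \<Otimes>\<^sub>M \<nu>) = sets (borel :: ('a \<times> 'a) measure)"
    using \<mu> \<nu> by (simp add: borel_prod[symmetric] cong: sets_pair_measure_cong)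
  have "distr (\<mu> \<Otimes>\<^sub>M \<nu>) borel fst = distr (\<mu> \<Otimes>\<^sub>M \<nu>) \<mu> fst"
    using \<mu> by (intro distr_cong) simp_all
  then have fst: "distr (\<mu> \<Otimes>\<^sub>M \<nu>) borel fst = \<mu>"
    by (simp add: P.M2.distr_pair_fst)
  have snd_meas: "snd \<in> measurable (\<mu> \<Otimes>\<^sub>M \<nu>) borel"
    using measurable_snd[of \<mu> \<nu>] by (simp add: measurable_cong_sets[OF refl \<nu>(2)])
  have snd: "distr (\<mu> \<Otimes>\<^sub>M \<nu>) borel snd = \<nu>"
  proof (rule measure_eqI)
    fix A assume "A \<in> sets (distr (\<mu> \<Otimes>\<^sub>M \<nu>) borel snd)"
    then have A: "A \<in> sets \<nu>"
      using \<nu> by simp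
    have "snd -` A \<inter> space (\<mu> \<Otimes>\<^sub>M \<nu>) = space \<mu> \<times> A"
      using sets.sets_into_space[OF A] by (auto simp: space_pair_measure)
    moreover have "emeasure (\<mu> \<Otimes>\<^sub>M \<nu>) (space \<mu> \<times> A) = emeasure \<nu> A"
      using A by (subst P.M2.emeasure_pair_measure_Times) (simp_all add: P.M1.emeasure_space_1)
    ultimately show "emeasure (distr (\<mu> \<Otimes>\<^sub>M \<nu>) borel snd) A = emeasure \<nu> A"
      using A \<nu> by (simp add: emeasure_distr[OF snd_meas])
  qed (use \<nu> in simp)
  show ?thesis
    unfolding couplings_def using fst snd sets P.prob_space_axioms by simp
qed

lemma dist_powr_le_two_powr:
  fixes x y z :: "'a::metric_space"
  assumes "1 \<le> p"
  shows "dist y z powr p \<le> 2 powr (p - 1) * (dist x y powr p + dist x z powr p)"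
proof -
  have "dist y z powr p \<le> (dist x y + dist x z) powr p"
    using assms dist_triangle3[of y z x] by (intro powr_mono2) simp_all
  also have "\<dots> \<le> 2 powr (p - 1) * (dist x y powr p + dist x z powr p)"
    using assms by (intro powr_add_le_two_powr) simp_all
  finally show ?thesis .
qed

lemma moment_finite_shift:
  fixes \<rho> :: "'a::{metric_space, second_countable_topology} measure"
  assumes \<rho>: "prob_space \<rho>" "sets \<rho> = sets borel" and p: "1 \<le> p" and fin: "moment p x \<rho> < \<infinity>"
  shows "moment p z \<rho> < \<infinity>"
proof -
  have "moment p z \<rho>
      \<le> (\<integral>\<^sup>+y. ennreal (2 powr (p - 1)) * (ennreal (dist x z powr p) + ennreal (dist x y powr p)) \<partial>\<rho>)"
    unfolding moment_def using dist_powr_le_two_powr[OF p, where x = x and y = z]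
    by (intro nn_integral_mono) (simp add: ennreal_mult[symmetric] ennreal_plus[symmetric] del: ennreal_plus)
  also have "\<dots> = ennreal (2 powr (p - 1)) * (ennreal (dist x z powr p) * emeasure \<rho> (space \<rho>) + moment p x \<rho>)"
    using \<rho>(2) by (simp add: moment_def nn_integral_cmult nn_integral_add borel_measurable_sets_borel)
  also have "\<dots> < \<infinity>"
    using fin prob_space.emeasure_space_1[OF \<rho>(1)] by (simp add: ennreal_mult_less_top)
  finally show ?thesis .
qed

lemma moment_finite_wasserstein_space:
  fixes \<rho> :: "'a::{real_normed_vector, second_countable_topology} measure"
  assumes "\<rho> \<in> wasserstein_space p" "1 \<le> p"
  shows "moment p x \<rho> < \<infinity>"
proof -
  have "moment p 0 \<rho> < \<infinity>"
    using assms(1) by (simp add: wasserstein_space_def moment_def dist_norm)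
  then show ?thesis
    using moment_finite_shift wasserstein_spaceD[OF assms(1)] assms(2) by blast
qed

lemma wasserstein_spaceI_moment:
  fixes \<rho> :: "'a::{real_normed_vector, second_countable_topology} measure"
  assumes "prob_space \<rho>" "sets \<rho> = sets borel" "1 \<le> p" "moment p x \<rho> < \<infinity>"
  shows "\<rho> \<in> wasserstein_space p"
  using moment_finite_shift[OF assms, of 0] assms by (simp add: wasserstein_space_def moment_def dist_norm)

lemma nn_integral_coupling_moments:
  fixes \<mu> \<nu> :: "'a::{metric_space, second_countable_topology} measure"
  assumes \<pi>: "\<pi> \<in> couplings \<mu> \<nu>"
  shows "(\<integral>\<^sup>+z. ennreal (2 powr (p - 1) * (dist x (fst z) powr p + dist x (snd z) powr p)) \<partial>\<pi>)
    = ennreal (2 powr (p - 1)) * (moment p x \<mu> + moment p x \<nu>)"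
proof -
  have "(\<integral>\<^sup>+z. ennreal (2 powr (p - 1) * (dist x (fst z) powr p + dist x (snd z) powr p)) \<partial>\<pi>)
      = ennreal (2 powr (p - 1)) * ((\<integral>\<^sup>+z. ennreal (dist x (fst z) powr p) \<partial>\<pi>)
          + (\<integral>\<^sup>+z. ennreal (dist x (snd z) powr p) \<partial>\<pi>))"
    using couplingsD(2)[OF \<pi>]
    by (simp add: ennreal_mult ennreal_plus nn_integral_cmult nn_integral_add borel_measurable_sets_borel)
  also have "\<dots> = ennreal (2 powr (p - 1)) * (moment p x \<mu> + moment p x \<nu>)"
  proof -
    have meas: "(\<lambda>u. ennreal (dist x u powr p)) \<in> borel_measurable borel"
      by measurable
    show ?thesis
      unfolding moment_def
      using nn_integral_coupling_fst[OF \<pi> meas] nn_integral_coupling_snd[OF \<pi> meas] by simp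
  qed
  finally show ?thesis .
qed

lemma coupling_cost_le_moments:
  fixes \<mu> \<nu> :: "'a::{metric_space, second_countable_topology} measure"
  assumes p: "1 \<le> p" and \<pi>: "\<pi> \<in> couplings \<mu> \<nu>"
  shows "coupling_cost p \<pi> \<le> ennreal (2 powr (p - 1)) * (moment p x \<mu> + moment p x \<nu>)"
  unfolding coupling_cost_def nn_integral_coupling_moments[OF \<pi>, symmetric]
  using dist_powr_le_two_powr[OF p] by (intro nn_integral_mono ennreal_leI)

lemma optimal_cost_finite:
  fixes \<mu> \<nu> :: "'a::{real_normed_vector, second_countable_topology} measure"
  assumes p: "1 \<le> p" and \<mu>: "\<mu> \<in> wasserstein_space p" and \<nu>: "\<nu> \<in> wasserstein_space p"
  shows "optimal_cost p \<mu> \<nu> < \<infinity>"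
proof -
  have \<pi>: "\<mu> \<Otimes>\<^sub>M \<nu> \<in> couplings \<mu> \<nu>"
    using wasserstein_spaceD[OF \<mu>] wasserstein_spaceD[OF \<nu>] by (intro pair_measure_in_couplings)
  have "optimal_cost p \<mu> \<nu> \<le> coupling_cost p (\<mu> \<Otimes>\<^sub>M \<nu>)"
    unfolding optimal_cost_def using \<pi> by (rule INF_lower)
  also have "\<dots> \<le> ennreal (2 powr (p - 1)) * (moment p 0 \<mu> + moment p 0 \<nu>)"
    by (rule coupling_cost_le_moments[OF p \<pi>])
  also have "\<dots> < \<infinity>"
    using moment_finite_wasserstein_space[OF \<mu> p] moment_finite_wasserstein_space[OF \<nu> p]
    by (simp add: ennreal_mult_less_top)
  finally show ?thesis .
qed

lemma wasserstein_dist_eqI: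
  assumes "1 \<le> p" "0 \<le> c" "optimal_cost p \<mu> \<nu> = ennreal (c powr p)"
  shows "wasserstein_dist p \<mu> \<nu> = c"
  using assms by (simp add: wasserstein_dist_optimal_cost powr_powr)

lemma optimal_cost_eq_wasserstein_dist_powr:
  assumes p: "1 \<le> p" and fin: "optimal_cost p \<mu> \<nu> < \<infinity>"
  shows "optimal_cost p \<mu> \<nu> = ennreal (wasserstein_dist p \<mu> \<nu> powr p)"
proof -
  have "0 < p"
    using p by simp
  then obtain G where "0 \<le> G" "optimal_cost p \<mu> \<nu> = ennreal (G powr p)"
    by (rule ennreal_obtain_powr[OF fin])
  moreover from this have "wasserstein_dist p \<mu> \<nu> = G"
    using p by (intro wasserstein_dist_eqI)
  ultimately show ?thesis
    by simp
qed

lemma moment_eq_wasserstein_dist_return: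
  fixes \<rho> :: "'a::{real_normed_vector, second_countable_topology} measure"
  assumes p: "1 \<le> p" and \<rho>: "\<rho> \<in> wasserstein_space p"
  shows "moment p x \<rho> = ennreal (wasserstein_dist p (return borel x) \<rho> powr p)"
proof -
  have opt: "optimal_cost p (return borel x) \<rho> = moment p x \<rho>"
    using wasserstein_spaceD[OF \<rho>] by (intro optimal_cost_return)
  then have "optimal_cost p (return borel x) \<rho> < \<infinity>"
    using moment_finite_wasserstein_space[OF \<rho> p] by simp
  from optimal_cost_eq_wasserstein_dist_powr[OF p this] show ?thesis
    by (simp add: opt)
qed

lemma moment_root_le_add_cost_root:
  fixes \<rho> \<sigma> :: "'a::{metric_space, second_countable_topology} measure"
  assumes p: "1 \<le> p" and \<pi>: "\<pi> \<in> couplings \<rho> \<sigma>"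
    and a: "0 \<le> a" "moment p x \<rho> = ennreal (a powr p)"
    and b: "moment p x \<sigma> = ennreal (b powr p)"
    and G: "0 \<le> G" "coupling_cost p \<pi> = ennreal (G powr p)"
  shows "b \<le> a + G"
proof -
  have meas: "(\<lambda>u. ennreal (dist x u powr p)) \<in> borel_measurable borel"
    by measurable
  have sets: "sets \<pi> = sets borel"
    using \<pi> by (rule couplingsD)
  have f: "(\<lambda>z. dist x (fst z)) \<in> borel_measurable \<pi>"
    and g: "(\<lambda>z. dist (fst z) (snd z)) \<in> borel_measurable \<pi>"
    by (intro borel_measurable_sets_borel[OF sets]; measurable)+
  have "ennreal (b powr p) = (\<integral>\<^sup>+z. ennreal (dist x (snd z) powr p) \<partial>\<pi>)"
    using b nn_integral_coupling_snd[OF \<pi> meas] by (simp add: moment_def)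
  also have "\<dots> \<le> (\<integral>\<^sup>+z. ennreal ((dist x (fst z) + dist (fst z) (snd z)) powr p) \<partial>\<pi>)"
    using p by (intro nn_integral_mono ennreal_leI powr_mono2) (simp_all add: dist_triangle)
  also have "\<dots> \<le> ennreal ((a + G) powr p)"
  proof (rule nn_integral_powr_add_le[OF p f g _ _ a(1) G(1)])
    show "(\<integral>\<^sup>+z. ennreal (dist x (fst z) powr p) \<partial>\<pi>) = ennreal (a powr p)"
      using a(2) nn_integral_coupling_fst[OF \<pi> meas] by (simp add: moment_def)
    show "(\<integral>\<^sup>+z. ennreal (dist (fst z) (snd z) powr p) \<partial>\<pi>) = ennreal (G powr p)"
      using G(2) by (simp add: coupling_cost_def)
  qed simp_all
  finally have "b powr p \<le> (a + G) powr p"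
    using a(1) G(1) by (simp add: ennreal_le_iff)
  then show ?thesis
    using p a(1) G(1) powr_le_imp_le_base[of p "a + G" b] by simp
qed

lemma moment_root_diff_le_optimal_cost:
  fixes \<rho> \<sigma> :: "'a::{metric_space, second_countable_topology} measure"
  assumes p: "1 \<le> p"
    and a: "0 \<le> a" "moment p x \<rho> = ennreal (a powr p)"
    and b: "0 \<le> b" "moment p x \<sigma> = ennreal (b powr p)"
  shows "ennreal (\<bar>a - b\<bar> powr p) \<le> optimal_cost p \<rho> \<sigma>"
  unfolding optimal_cost_def
proof (rule INF_greatest)
  fix \<pi> assume \<pi>: "\<pi> \<in> couplings \<rho> \<sigma>"
  show "ennreal (\<bar>a - b\<bar> powr p) \<le> coupling_cost p \<pi>"
  proof (cases "coupling_cost p \<pi> < \<infinity>")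
    case True
    have "0 < p"
      using p by simp
    with True obtain G where G: "0 \<le> G" "coupling_cost p \<pi> = ennreal (G powr p)"
      by (rule ennreal_obtain_powr)
    have "b \<le> a + G"
      by (rule moment_root_le_add_cost_root[OF p \<pi> a b(2) G])
    moreover have "a \<le> b + G"
    proof (rule moment_root_le_add_cost_root[OF p couplings_swap[OF \<pi>] b a(2) G(1)])
      show "coupling_cost p (distr \<pi> borel (\<lambda>z. (snd z, fst z))) = ennreal (G powr p)"
        using G(2) couplingsD(2)[OF \<pi>] by (simp add: coupling_cost_swap)
    qed
    ultimately have "\<bar>a - b\<bar> powr p \<le> G powr p"
      using p by (intro powr_mono2) simp_all
    then show ?thesis
      using G(2) by (simp add: ennreal_leI)
  qed (simp add: less_top[symmetric])
qed

section \<open>Dilations\<close>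

definition dilation :: "'a::real_normed_vector \<Rightarrow> real \<Rightarrow> 'a \<Rightarrow> 'a" where
  "dilation x \<alpha> y = x + \<alpha> *\<^sub>R (y - x)"

lemma borel_measurable_dilation [measurable]:
  "dilation x \<alpha> \<in> borel_measurable (borel :: 'a::{real_normed_vector, second_countable_topology} measure)"
  unfolding dilation_def by measurable

lemma dilation_one [simp]: "dilation x 1 = (\<lambda>y. y)"
  by (simp add: dilation_def fun_eq_iff)

lemma dilation_zero [simp]: "dilation x 0 = (\<lambda>y. x)"
  by (simp add: dilation_def fun_eq_iff)

lemma dist_dilation: "dist (dilation x \<alpha> y) (dilation x \<beta> y) = \<bar>\<alpha> - \<beta>\<bar> * dist x y"
proof -
  have "dilation x \<alpha> y - dilation x \<beta> y = (\<alpha> - \<beta>) *\<^sub>R (y - x)"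
    by (simp add: dilation_def algebra_simps)
  then show ?thesis
    by (simp add: dist_norm norm_minus_commute)
qed

lemma dist_center_dilation: "dist x (dilation x \<alpha> y) = \<bar>\<alpha>\<bar> * dist x y"
  using dist_dilation[of x 0 y \<alpha>] by simp

lemma moment_distr_dilation:
  fixes \<rho> :: "'a::{real_normed_vector, second_countable_topology} measure"
  assumes "sets \<rho> = sets borel" "0 \<le> \<alpha>"
  shows "moment p x (distr \<rho> borel (dilation x \<alpha>)) = ennreal (\<alpha> powr p) * moment p x \<rho>"
proof -
  have "moment p x (distr \<rho> borel (dilation x \<alpha>)) = (\<integral>\<^sup>+y. ennreal (dist x (dilation x \<alpha> y) powr p) \<partial>\<rho>)"
    unfolding moment_def using assms(1)
    by (intro nn_integral_distr) (simp_all add: borel_measurable_sets_borel)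
  also have "\<dots> = (\<integral>\<^sup>+y. ennreal (\<alpha> powr p) * ennreal (dist x y powr p) \<partial>\<rho>)"
    using assms(2) by (simp add: dist_center_dilation powr_mult ennreal_mult)
  also have "\<dots> = ennreal (\<alpha> powr p) * moment p x \<rho>"
    unfolding moment_def using assms(1) by (intro nn_integral_cmult) (simp add: borel_measurable_sets_borel)
  finally show ?thesis .
qed

lemma distr_dilation_in_wasserstein_space:
  fixes \<rho> :: "'a::{real_normed_vector, second_countable_topology} measure"
  assumes \<rho>: "\<rho> \<in> wasserstein_space p" and p: "1 \<le> p" and \<alpha>: "0 \<le> \<alpha>"
  shows "distr \<rho> borel (dilation x \<alpha>) \<in> wasserstein_space p"
proof (rule wasserstein_spaceI_moment[OF _ _ p])
  note \<rho>D = wasserstein_spaceD[OF \<rho>]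
  show "prob_space (distr \<rho> borel (dilation x \<alpha>))"
    using \<rho>D by (intro prob_space.prob_space_distr) (simp_all add: borel_measurable_sets_borel)
  show "moment p x (distr \<rho> borel (dilation x \<alpha>)) < \<infinity>"
    using moment_finite_wasserstein_space[OF \<rho> p]
    by (simp add: moment_distr_dilation[OF \<rho>D(2) \<alpha>] ennreal_mult_less_top)
qed simp

lemma wasserstein_dist_distr_dilation:
  fixes \<rho> :: "'a::{real_normed_vector, second_countable_topology} measure"
  assumes \<rho>: "\<rho> \<in> wasserstein_space p" and p: "1 \<le> p"
    and R: "0 \<le> R" "moment p x \<rho> = ennreal (R powr p)" and \<alpha>: "0 \<le> \<alpha>" and \<beta>: "0 \<le> \<beta>"
  shows "wasserstein_dist p (distr \<rho> borel (dilation x \<alpha>)) (distr \<rho> borel (dilation x \<beta>)) = \<bar>\<alpha> - \<beta>\<bar> * R"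
proof (rule wasserstein_dist_eqI[OF p])
  note \<rho>D = wasserstein_spaceD[OF \<rho>]
  have meas: "dilation x \<gamma> \<in> borel_measurable \<rho>" for \<gamma>
    using \<rho>D(2) by (simp add: borel_measurable_sets_borel)
  have moment: "moment p x (distr \<rho> borel (dilation x \<gamma>)) = ennreal ((\<gamma> * R) powr p)" if "0 \<le> \<gamma>" for \<gamma>
    using that R by (simp add: moment_distr_dilation[OF \<rho>D(2)] powr_mult ennreal_mult)
  have "ennreal (\<bar>\<alpha> * R - \<beta> * R\<bar> powr p)
      \<le> optimal_cost p (distr \<rho> borel (dilation x \<alpha>)) (distr \<rho> borel (dilation x \<beta>))"
    using \<alpha> \<beta> R by (intro moment_root_diff_le_optimal_cost[OF p _ moment[OF \<alpha>] _ moment[OF \<beta>]]) simp_all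
  moreover have "optimal_cost p (distr \<rho> borel (dilation x \<alpha>)) (distr \<rho> borel (dilation x \<beta>))
      \<le> coupling_cost p (distr \<rho> borel (\<lambda>y. (dilation x \<alpha> y, dilation x \<beta> y)))"
    unfolding optimal_cost_def by (intro INF_lower distr_Pair_in_couplings \<rho>D(1) meas)
  moreover have "coupling_cost p (distr \<rho> borel (\<lambda>y. (dilation x \<alpha> y, dilation x \<beta> y)))
      = ennreal ((\<bar>\<alpha> - \<beta>\<bar> * R) powr p)"
  proof -
    have "coupling_cost p (distr \<rho> borel (\<lambda>y. (dilation x \<alpha> y, dilation x \<beta> y)))
        = (\<integral>\<^sup>+y. ennreal (\<bar>\<alpha> - \<beta>\<bar> powr p) * ennreal (dist x y powr p) \<partial>\<rho>)"
      by (simp add: coupling_cost_distr_Pair meas dist_dilation powr_mult ennreal_mult)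
    also have "\<dots> = ennreal ((\<bar>\<alpha> - \<beta>\<bar> * R) powr p)"
      using R \<rho>D(2)
      by (simp add: nn_integral_cmult borel_measurable_sets_borel moment_def[symmetric] powr_mult ennreal_mult)
    finally show ?thesis .
  qed
  moreover have "\<bar>\<alpha> * R - \<beta> * R\<bar> = \<bar>\<alpha> - \<beta>\<bar> * R"
    using R by (simp add: left_diff_distrib[symmetric] abs_mult)
  ultimately show "optimal_cost p (distr \<rho> borel (dilation x \<alpha>)) (distr \<rho> borel (dilation x \<beta>))
      = ennreal ((\<bar>\<alpha> - \<beta>\<bar> * R) powr p)"
    by (metis antisym)
qed (use R in simp)

section \<open>Prolonging geodesics that start at a Dirac measure\<close>

text \<open>This replaces the triangle inequality for \<open>W\<^sub>p\<close>, whose proof would need the gluing lemma.\<close>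

lemma optimal_cost_le_if_coupling_transfer:
  assumes p: "1 \<le> p" and fin: "optimal_cost p \<rho> \<nu> < \<infinity>" and k: "0 \<le> k"
    and transfer: "\<And>\<pi> G. \<pi> \<in> couplings \<rho> \<nu> \<Longrightarrow> 0 \<le> G \<Longrightarrow> coupling_cost p \<pi> = ennreal (G powr p)
      \<Longrightarrow> optimal_cost p \<rho> \<sigma> \<le> ennreal ((G + k) powr p)"
  shows "optimal_cost p \<rho> \<sigma> \<le> ennreal ((wasserstein_dist p \<rho> \<nu> + k) powr p)"
proof -
  define W where "W = wasserstein_dist p \<rho> \<nu>"
  have p0: "0 < p"
    using p by simp
  have W0: "0 \<le> W"
    by (simp add: W_def wasserstein_dist_optimal_cost)
  have opt: "optimal_cost p \<rho> \<nu> = ennreal (W powr p)"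
    unfolding W_def by (rule optimal_cost_eq_wasserstein_dist_powr[OF p fin])
  have bound: "optimal_cost p \<rho> \<sigma> \<le> ennreal ((W + k + e) powr p)" if e: "0 < e" for e
  proof -
    have "optimal_cost p \<rho> \<nu> < ennreal ((W + e) powr p)"
      unfolding opt using W0 e p0 by (intro ennreal_lessI powr_less_mono2) simp_all
    then obtain \<pi> where \<pi>: "\<pi> \<in> couplings \<rho> \<nu>" and cost: "coupling_cost p \<pi> < ennreal ((W + e) powr p)"
      by (auto simp: optimal_cost_def INF_less_iff)
    from cost have "coupling_cost p \<pi> < \<infinity>"
      using order.strict_trans by fastforce
    with p0 obtain G where G: "0 \<le> G" "coupling_cost p \<pi> = ennreal (G powr p)"
      using ennreal_obtain_powr by metis
    have "G \<le> W + e"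
      using cost G W0 e p0 powr_le_imp_le_base[of p "W + e" G] by (simp add: ennreal_less_iff)
    then have "ennreal ((G + k) powr p) \<le> ennreal ((W + k + e) powr p)"
      using G(1) k p0 by (intro ennreal_leI powr_mono2) simp_all
    with transfer[OF \<pi> G] show ?thesis
      by (rule order.trans)
  qed
  show ?thesis
    unfolding W_def[symmetric] by (rule ennreal_le_powr_if_le_add[OF p0 _ bound]) (use W0 k in simp)
qed

lemma coupling_cost_distr_dilation_snd_le:
  fixes \<rho> \<nu> :: "'a::{real_normed_vector, second_countable_topology} measure"
  assumes p: "1 \<le> p" and \<pi>: "\<pi> \<in> couplings \<rho> \<nu>" and c: "1 \<le> c"
    and R: "0 \<le> R" "moment p x \<nu> = ennreal (R powr p)"
    and G: "0 \<le> G" "coupling_cost p \<pi> = ennreal (G powr p)"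
  shows "coupling_cost p (distr \<pi> borel (\<lambda>z. (fst z, dilation x c (snd z))))
    \<le> ennreal ((G + (c - 1) * R) powr p)"
proof -
  have sets: "sets \<pi> = sets borel"
    using \<pi> by (rule couplingsD)
  have f: "(\<lambda>z. dist (fst z) (snd z)) \<in> borel_measurable \<pi>"
    and g: "(\<lambda>z. (c - 1) * dist x (snd z)) \<in> borel_measurable \<pi>"
    and h: "(\<lambda>z. dilation x c (snd z)) \<in> borel_measurable \<pi>"
    and fst: "fst \<in> borel_measurable \<pi>"
    by (intro borel_measurable_sets_borel[OF sets]; measurable)+
  have meas: "(\<lambda>u. ennreal (dist x u powr p)) \<in> borel_measurable borel"
    by measurable
  have "coupling_cost p (distr \<pi> borel (\<lambda>z. (fst z, dilation x c (snd z))))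
      = (\<integral>\<^sup>+z. ennreal (dist (fst z) (dilation x c (snd z)) powr p) \<partial>\<pi>)"
    using coupling_cost_distr_Pair[OF fst h] by simp
  also have "\<dots> \<le> (\<integral>\<^sup>+z. ennreal ((dist (fst z) (snd z) + (c - 1) * dist x (snd z)) powr p) \<partial>\<pi>)"
  proof (intro nn_integral_mono ennreal_leI powr_mono2)
    fix z :: "'a \<times> 'a"
    have "dist (snd z) (dilation x c (snd z)) = (c - 1) * dist x (snd z)"
      using dist_dilation[of x 1 "snd z" c] c by simp
    then show "dist (fst z) (dilation x c (snd z)) \<le> dist (fst z) (snd z) + (c - 1) * dist x (snd z)"
      using dist_triangle[of "fst z" "dilation x c (snd z)" "snd z"] by simp
  qed (use p in simp_all)
  also have "\<dots> \<le> ennreal ((G + (c - 1) * R) powr p)"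
  proof (rule nn_integral_powr_add_le[OF p f g _ _ G(1)])
    show "(\<integral>\<^sup>+z. ennreal (dist (fst z) (snd z) powr p) \<partial>\<pi>) = ennreal (G powr p)"
      using G(2) by (simp add: coupling_cost_def)
    have "(\<integral>\<^sup>+z. ennreal (((c - 1) * dist x (snd z)) powr p) \<partial>\<pi>)
        = ennreal ((c - 1) powr p) * (\<integral>\<^sup>+z. ennreal (dist x (snd z) powr p) \<partial>\<pi>)"
      using c sets
      by (simp add: powr_mult ennreal_mult nn_integral_cmult borel_measurable_sets_borel)
    also have "\<dots> = ennreal (((c - 1) * R) powr p)"
      using c R nn_integral_coupling_snd[OF \<pi> meas] by (simp add: moment_def powr_mult ennreal_mult)
    finally show "(\<integral>\<^sup>+z. ennreal (((c - 1) * dist x (snd z)) powr p) \<partial>\<pi>) = ennreal (((c - 1) * R) powr p)" .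
  qed (use c R in simp_all)
  finally show ?thesis .
qed

lemma wasserstein_dist_distr_dilation_beyond:
  fixes \<rho> \<nu> :: "'a::{real_normed_vector, second_countable_topology} measure"
  assumes p: "1 \<le> p" and \<rho>: "\<rho> \<in> wasserstein_space p" and \<nu>: "\<nu> \<in> wasserstein_space p"
    and s: "0 \<le> s" "moment p x \<rho> = ennreal (s powr p)"
    and T: "s \<le> T" "0 < T" "moment p x \<nu> = ennreal (T powr p)"
    and W: "wasserstein_dist p \<rho> \<nu> = T - s" and t: "T \<le> t"
  shows "wasserstein_dist p \<rho> (distr \<nu> borel (dilation x (t / T))) = t - s"
proof (rule wasserstein_dist_eqI[OF p])
  define \<sigma> where "\<sigma> = distr \<nu> borel (dilation x (t / T))"
  have c: "1 \<le> t / T"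
    using T t by simp
  have "moment p x \<sigma> = ennreal ((t / T) powr p) * ennreal (T powr p)"
    unfolding \<sigma>_def using c T(3) by (simp add: moment_distr_dilation[OF wasserstein_spaceD(2)[OF \<nu>]])
  also have "\<dots> = ennreal (t powr p)"
    using c T(2) by (simp add: ennreal_mult[symmetric] powr_mult[symmetric])
  finally have moment_\<sigma>: "moment p x \<sigma> = ennreal (t powr p)" .
  have "ennreal (\<bar>s - t\<bar> powr p) \<le> optimal_cost p \<rho> \<sigma>"
    using s T t by (intro moment_root_diff_le_optimal_cost[OF p _ s(2) _ moment_\<sigma>]) simp_all
  moreover have "optimal_cost p \<rho> \<sigma> \<le> ennreal ((wasserstein_dist p \<rho> \<nu> + (t - T)) powr p)"
  proof (rule optimal_cost_le_if_coupling_transfer[OF p optimal_cost_finite[OF p \<rho> \<nu>]])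
    fix \<pi> G
    assume \<pi>: "\<pi> \<in> couplings \<rho> \<nu>" and G: "0 \<le> G" "coupling_cost p \<pi> = ennreal (G powr p)"
    have "distr \<pi> borel (\<lambda>z. (fst z, dilation x (t / T) (snd z))) \<in> couplings \<rho> \<sigma>"
      using couplings_distr_map_prod[OF \<pi>, of "\<lambda>u. u" "dilation x (t / T)"] wasserstein_spaceD(2)[OF \<rho>]
      by (simp add: \<sigma>_def distr_id2)
    then have "optimal_cost p \<rho> \<sigma> \<le> coupling_cost p (distr \<pi> borel (\<lambda>z. (fst z, dilation x (t / T) (snd z))))"
      unfolding optimal_cost_def by (rule INF_lower)
    also have "\<dots> \<le> ennreal ((G + (t / T - 1) * T) powr p)"
      using T by (intro coupling_cost_distr_dilation_snd_le[OF p \<pi> c _ T(3) G]) simp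
    finally have "optimal_cost p \<rho> \<sigma> \<le> ennreal ((G + (t / T - 1) * T) powr p)" .
    moreover have "(t / T - 1) * T = t - T"
      using T(2) by (simp add: field_simps)
    ultimately show "optimal_cost p \<rho> \<sigma> \<le> ennreal ((G + (t - T)) powr p)"
      by simp
  qed (use t in simp)
  ultimately show "optimal_cost p \<rho> (distr \<nu> borel (dilation x (t / T))) = ennreal ((t - s) powr p)"
    using s T t W by (simp add: \<sigma>_def)
qed (use T t in simp)

lemma wgeodesic_from_return_extends:
  fixes \<gamma> :: "real \<Rightarrow> 'a::{real_normed_vector, second_countable_topology} measure"
  assumes p: "1 \<le> p" and T: "0 < T" and \<gamma>: "wgeodesic p {0..T} \<gamma>" and \<gamma>0: "\<gamma> 0 = return borel x"
  shows "\<exists>\<gamma>'. wgeodesic p {0..} \<gamma>' \<and> (\<forall>t\<in>{0..T}. \<gamma>' t = \<gamma> t)"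
proof -
  have mem: "\<And>s. s \<in> {0..T} \<Longrightarrow> \<gamma> s \<in> wasserstein_space p"
    and dist: "\<And>s t. s \<in> {0..T} \<Longrightarrow> t \<in> {0..T} \<Longrightarrow> wasserstein_dist p (\<gamma> s) (\<gamma> t) = \<bar>s - t\<bar>"
    using \<gamma> unfolding wgeodesic_def by blast+
  have T_in: "T \<in> {0..T}"
    using T by simp
  have moment: "moment p x (\<gamma> s) = ennreal (s powr p)" if "s \<in> {0..T}" for s
    using moment_eq_wasserstein_dist_return[OF p mem[OF that]] dist[of 0 s] that T \<gamma>0 by simp
  define \<gamma>' where "\<gamma>' t = (if t \<le> T then \<gamma> t else distr (\<gamma> T) borel (dilation x (t / T)))" for t
  have mem': "\<gamma>' t \<in> wasserstein_space p" if "0 \<le> t" for t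
    using that T mem[OF T_in] mem distr_dilation_in_wasserstein_space[OF mem[OF T_in] p]
    by (simp add: \<gamma>'_def)
  have dist': "wasserstein_dist p (\<gamma>' s) (\<gamma>' t) = t - s" if "0 \<le> s" "s \<le> t" for s t
  proof -
    consider "t \<le> T" | "s \<le> T" "T < t" | "T < s"
      by linarith
    then show ?thesis
    proof cases
      case 1
      then show ?thesis
        using that dist[of s t] by (simp add: \<gamma>'_def)
    next
      case 2
      then have s_in: "s \<in> {0..T}"
        using that by simp
      have "wasserstein_dist p (\<gamma> s) (distr (\<gamma> T) borel (dilation x (t / T))) = t - s"
        using 2 T s_in dist[OF s_in T_in]
        by (intro wasserstein_dist_distr_dilation_beyond[OF p mem[OF s_in] mem[OF T_in] _ moment[OF s_in]
              _ _ moment[OF T_in]]) simp_all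
      then show ?thesis
        using 2 by (simp add: \<gamma>'_def)
    next
      case 3
      have "wasserstein_dist p (distr (\<gamma> T) borel (dilation x (s / T))) (distr (\<gamma> T) borel (dilation x (t / T)))
          = \<bar>s / T - t / T\<bar> * T"
        using 3 that T by (intro wasserstein_dist_distr_dilation[OF mem[OF T_in] p _ moment[OF T_in]]) simp_all
      also have "\<dots> = t - s"
        using that T by (simp add: abs_if field_simps)
      finally show ?thesis
        using 3 that by (simp add: \<gamma>'_def)
    qed
  qed
  have "wasserstein_dist p (\<gamma>' s) (\<gamma>' t) = \<bar>s - t\<bar>" if "0 \<le> s" "0 \<le> t" for s t
    using that dist'[of s t] dist'[of t s] wasserstein_dist_commute[of p "\<gamma>' s" "\<gamma>' t"]
    by (cases "s \<le> t") simp_all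
  then have "wgeodesic p {0..} \<gamma>'"
    unfolding wgeodesic_def using mem' by simp
  then show ?thesis
    by (intro exI[of _ \<gamma>']) (simp add: \<gamma>'_def)
qed

section \<open>Geodesics that cannot be prolonged\<close>

lemma integrable_inner_wasserstein_space:
  fixes \<rho> :: "'a::{real_inner, second_countable_topology} measure"
  assumes \<rho>: "\<rho> \<in> wasserstein_space p" and p: "1 \<le> p"
  shows "integrable \<rho> (\<lambda>x. inner x w)"
proof -
  note \<rho>D = wasserstein_spaceD[OF \<rho>]
  interpret prob_space \<rho>
    by (rule \<rho>D(1))
  have "integrable \<rho> (\<lambda>x. norm x powr p)"
    using \<rho> \<rho>D(2) by (intro integrableI_bounded) (simp_all add: wasserstein_space_def borel_measurable_sets_borel)
  then have bound: "integrable \<rho> (\<lambda>x. norm w * (1 + norm x powr p))"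
    by (auto intro!: integrable_mult_right Bochner_Integration.integrable_add)
  have "norm (inner x w) \<le> norm (norm w * (1 + norm x powr p))" for x
  proof -
    have "norm x \<le> 1 + norm x powr p"
    proof (cases "norm x \<le> 1")
      case False
      then have "norm x powr 1 \<le> norm x powr p"
        using p by (intro powr_mono) simp_all
      then show ?thesis
        using False by simp
    qed (use powr_ge_zero[of "norm x" p] in linarith)
    then have "norm x * norm w \<le> (1 + norm x powr p) * norm w"
      by (rule mult_right_mono) simp
    then show ?thesis
      using Cauchy_Schwarz_ineq2[of x w] by (simp add: mult.commute)
  qed
  moreover have "(\<lambda>x. inner x w) \<in> borel_measurable \<rho>"
    using \<rho>D(2) by (simp add: borel_measurable_sets_borel)
  ultimately show ?thesis
    using bound by (intro Bochner_Integration.integrable_bound[OF bound]) simp_all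
qed

lemma (in prob_space) AE_eq_expectation_if_AE_le:
  fixes f :: "'a \<Rightarrow> real"
  assumes f: "integrable M f" and le: "AE x in M. f x \<le> expectation f"
  shows "AE x in M. f x = expectation f"
proof -
  have "integral\<^sup>L M (\<lambda>x. expectation f - f x) = 0"
    using f by (simp add: prob_space)
  then have "AE x in M. expectation f - f x = 0"
    using f le by (subst (asm) integral_nonneg_eq_0_iff_AE) auto
  then show ?thesis
    by eventually_elim simp
qed

lemma (in prob_space) eq_return_if_AE_eq:
  assumes sets: "sets M = sets N" and AE: "AE x in M. x = c"
  shows "M = return N c"
proof (rule measure_eqI)
  fix A
  assume A: "A \<in> sets M"
  have "emeasure M A = (\<integral>\<^sup>+x. indicator A x \<partial>M)"
    using A by simp
  also have "\<dots> = (\<integral>\<^sup>+x. indicator A c \<partial>M)"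
    using AE by (intro nn_integral_cong_AE) auto
  also have "\<dots> = emeasure (return N c) A"
    using A sets by (simp add: emeasure_space_1)
  finally show "emeasure M A = emeasure (return N c) A" .
qed (simp add: sets)

lemma eq_return_if_AE_inner_const:
  fixes \<mu> :: "'a::{real_inner, second_countable_topology} measure"
  assumes \<mu>: "prob_space \<mu>" "sets \<mu> = sets borel" and const: "\<And>w. \<exists>c. AE x in \<mu>. inner x w = c"
  shows "\<exists>x1. \<mu> = return borel x1"
proof -
  interpret prob_space \<mu>
    by (rule \<mu>(1))
  obtain c where c: "\<And>w. AE x in \<mu>. inner x w = c w"
    using const by metis
  obtain D :: "'a set" where D: "countable D" "\<And>X. open X \<Longrightarrow> X \<noteq> {} \<Longrightarrow> \<exists>d\<in>D. d \<in> X"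
    using countable_dense_exists by blast
  have AE_D: "AE x in \<mu>. \<forall>w\<in>D. inner x w = c w"
    using D(1) c by (subst AE_ball_countable) auto
  have "\<exists>x1. \<forall>w\<in>D. inner x1 w = c w"
  proof (rule ccontr)
    assume none: "\<nexists>x1. \<forall>w\<in>D. inner x1 w = c w"
    have "AE x in \<mu>. False"
      using AE_D by eventually_elim (use none in blast)
    then show False
      by (simp add: AE_False)
  qed
  then obtain x1 where x1: "\<forall>w\<in>D. inner x1 w = c w" ..
  \<comment> \<open>a point is determined by its inner products with a dense set\<close>
  have "AE x in \<mu>. x = x1"
    using AE_D
  proof eventually_elim
    fix x
    assume x: "\<forall>w\<in>D. inner x w = c w"
    show "x = x1"
    proof (rule ccontr)
      assume "x \<noteq> x1"
      have "open {w. inner (x - x1) w \<noteq> 0}"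
        by (intro open_Collect_neq continuous_intros)
      moreover have "x - x1 \<in> {w. inner (x - x1) w \<noteq> 0}"
        using \<open>x \<noteq> x1\<close> by simp
      ultimately obtain d where "d \<in> D" "inner (x - x1) d \<noteq> 0"
        using D(2) by blast
      then show False
        using x x1 by (simp add: inner_diff_left)
    qed
  qed
  then have "\<mu> = return borel x1"
    by (rule eq_return_if_AE_eq[OF \<mu>(2)])
  then show ?thesis ..
qed

lemma exists_halfspaces_not_AE:
  fixes \<mu> :: "'a::{real_inner, second_countable_topology} measure"
  assumes \<mu>: "\<mu> \<in> wasserstein_space p" and p: "1 \<le> p" and nd: "\<nexists>x. \<mu> = return borel x"
  shows "\<exists>w x0. \<not> (AE x in \<mu>. inner (x - x0) w \<le> 0) \<and> \<not> (AE x in \<mu>. 0 \<le> inner (x - x0) w)"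
proof -
  note \<mu>D = wasserstein_spaceD[OF \<mu>]
  interpret prob_space \<mu>
    by (rule \<mu>D(1))
  obtain w where w: "\<And>c. \<not> (AE x in \<mu>. inner x w = c)"
    using eq_return_if_AE_inner_const[OF \<mu>D(1,2)] nd by blast
  define c where "c = expectation (\<lambda>x. inner x w)"
  have int: "integrable \<mu> (\<lambda>x. inner x w)"
    by (rule integrable_inner_wasserstein_space[OF \<mu> p])
  have below: "\<not> (AE x in \<mu>. inner x w \<le> c)"
    using AE_eq_expectation_if_AE_le[OF int] w unfolding c_def by blast
  have above: "\<not> (AE x in \<mu>. c \<le> inner x w)"
  proof
    assume "AE x in \<mu>. c \<le> inner x w"
    then have "AE x in \<mu>. - inner x w \<le> expectation (\<lambda>x. - inner x w)"
      by (simp add: c_def)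
    then have "AE x in \<mu>. - inner x w = expectation (\<lambda>x. - inner x w)"
      using int by (intro AE_eq_expectation_if_AE_le) simp_all
    with w[of c] show False
      by (simp add: c_def)
  qed
  have "w \<noteq> 0"
    using w[of 0] by auto
  define x0 where "x0 = (c / inner w w) *\<^sub>R w"
  have "inner (x - x0) w = inner x w - c" for x
    using \<open>w \<noteq> 0\<close> by (simp add: x0_def inner_diff_left)
  then show ?thesis
    using below above by (intro exI[of _ w] exI[of _ x0]) simp
qed

lemma dist_eq_add_if_two_powr_le:
  fixes x y z :: "'a::metric_space"
  assumes p: "1 \<le> p" and le: "2 powr (p - 1) * (dist z x powr p + dist z y powr p) \<le> dist x y powr p"
  shows "dist x y = dist x z + dist z y"
proof -
  have "(dist z x + dist z y) powr p \<le> dist x y powr p"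
    using powr_add_le_two_powr[of "dist z x" "dist z y" p] p le by simp
  then have "dist z x + dist z y \<le> dist x y"
    using p powr_le_imp_le_base[of p "dist x y"] by simp
  then show ?thesis
    using dist_triangle[of x y z] by (simp add: dist_commute)
qed

lemma inner_nonneg_if_dist_eq_add:
  fixes x y z w :: "'a::real_inner"
  assumes dist: "dist x y = dist x z + dist z y" and yz: "y \<noteq> z" and w: "0 \<le> inner (z - y) w"
  shows "0 \<le> inner (x - z) w"
proof -
  have "norm (x - z) *\<^sub>R (z - y) = norm (z - y) *\<^sub>R (x - z)"
    using dist by (simp add: dist_triangle_eq)
  then have "norm (z - y) * inner (x - z) w = norm (x - z) * inner (z - y) w"
    by (metis inner_scaleR_left)
  then have "0 \<le> norm (z - y) * inner (x - z) w"
    using w by simp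
  then show ?thesis
    using yz by (simp add: zero_le_mult_iff)
qed

lemma AE_le_if_nn_integral_le:
  fixes f g :: "'b \<Rightarrow> real"
  assumes f: "f \<in> borel_measurable M" and g: "g \<in> borel_measurable M"
    and f0: "\<And>x. 0 \<le> f x" and fg: "\<And>x. f x \<le> g x"
    and le: "(\<integral>\<^sup>+x. ennreal (g x) \<partial>M) \<le> (\<integral>\<^sup>+x. ennreal (f x) \<partial>M)"
    and fin: "(\<integral>\<^sup>+x. ennreal (g x) \<partial>M) < \<infinity>"
  shows "AE x in M. g x \<le> f x"
proof -
  have fin_f: "(\<integral>\<^sup>+x. ennreal (f x) \<partial>M) < \<infinity>"
    using fg by (intro le_less_trans[OF _ fin] nn_integral_mono ennreal_leI)
  have "(\<integral>\<^sup>+x. ennreal (g x) \<partial>M) = (\<integral>\<^sup>+x. ennreal (f x) + ennreal (g x - f x) \<partial>M)"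
    using f0 fg by (intro nn_integral_cong) (simp add: ennreal_plus[symmetric] del: ennreal_plus)
  also have "\<dots> = (\<integral>\<^sup>+x. ennreal (f x) \<partial>M) + (\<integral>\<^sup>+x. ennreal (g x - f x) \<partial>M)"
    using f g by (intro nn_integral_add) simp_all
  finally have "(\<integral>\<^sup>+x. ennreal (f x) \<partial>M) + (\<integral>\<^sup>+x. ennreal (g x - f x) \<partial>M)
      \<le> (\<integral>\<^sup>+x. ennreal (f x) \<partial>M) + 0"
    using le by simp
  then have "(\<integral>\<^sup>+x. ennreal (g x - f x) \<partial>M) = 0"
    using fin_f by (subst (asm) ennreal_add_left_cancel_le) auto
  then have "AE x in M. ennreal (g x - f x) = 0"
    using f g by (subst (asm) nn_integral_0_iff_AE) simp_all
  then show ?thesis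
    by eventually_elim (simp add: ennreal_eq_0_iff)
qed

lemma AE_dist_eq_add_if_wasserstein_dist_eq:
  fixes \<mu> \<nu> :: "'a::{real_normed_vector, second_countable_topology} measure"
  assumes p: "1 \<le> p" and \<mu>: "\<mu> \<in> wasserstein_space p" and \<nu>: "\<nu> \<in> wasserstein_space p"
    and T: "0 \<le> T" "moment p z \<mu> = ennreal (T powr p)" "moment p z \<nu> = ennreal (T powr p)"
    and W: "wasserstein_dist p \<mu> \<nu> = 2 * T"
  shows "AE y in \<nu>. AE x in \<mu>. dist x y = dist x z + dist z y"
proof -
  note \<mu>D = wasserstein_spaceD[OF \<mu>] and \<nu>D = wasserstein_spaceD[OF \<nu>]
  interpret P: pair_prob_space \<mu> \<nu>
    using \<mu>D \<nu>D by (simp add: pair_prob_space_def pair_sigma_finite_def prob_space_imp_sigma_finite)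
  have \<pi>: "\<mu> \<Otimes>\<^sub>M \<nu> \<in> couplings \<mu> \<nu>"
    using \<mu>D \<nu>D by (intro pair_measure_in_couplings)
  have sets: "sets (\<mu> \<Otimes>\<^sub>M \<nu>) = sets borel"
    using \<pi> by (rule couplingsD)
  define bound where "bound u = 2 powr (p - 1) * (dist z (fst u) powr p + dist z (snd u) powr p)" for u
  have bound_meas: "bound \<in> borel_measurable (\<mu> \<Otimes>\<^sub>M \<nu>)"
    unfolding bound_def by (intro borel_measurable_sets_borel[OF sets]) measurable
  have dist_meas: "(\<lambda>u. dist (fst u) (snd u) powr p) \<in> borel_measurable (\<mu> \<Otimes>\<^sub>M \<nu>)"
    by (intro borel_measurable_sets_borel[OF sets]) measurable
  have "(\<integral>\<^sup>+u. ennreal (bound u) \<partial>(\<mu> \<Otimes>\<^sub>M \<nu>)) = ennreal (2 powr (p - 1)) * (ennreal (T powr p) + ennreal (T powr p))"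
    unfolding bound_def nn_integral_coupling_moments[OF \<pi>] T by simp
  also have "\<dots> = ennreal ((2 * T) powr p)"
    using two_powr_mult_add[OF T(1), of p]
    by (simp add: ennreal_mult[symmetric] ennreal_plus[symmetric] del: ennreal_plus)
  finally have int_bound: "(\<integral>\<^sup>+u. ennreal (bound u) \<partial>(\<mu> \<Otimes>\<^sub>M \<nu>)) = ennreal ((2 * T) powr p)" .
  \<comment> \<open>the product coupling is optimal, so the pointwise bound \<open>dist_powr_le_two_powr\<close> is attained a.e.\<close>
  have "ennreal ((2 * T) powr p) = optimal_cost p \<mu> \<nu>"
    using optimal_cost_eq_wasserstein_dist_powr[OF p optimal_cost_finite[OF p \<mu> \<nu>]] W by simp
  also have "\<dots> \<le> coupling_cost p (\<mu> \<Otimes>\<^sub>M \<nu>)"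
    unfolding optimal_cost_def using \<pi> by (rule INF_lower)
  finally have "AE u in \<mu> \<Otimes>\<^sub>M \<nu>. bound u \<le> dist (fst u) (snd u) powr p"
    using int_bound dist_powr_le_two_powr[OF p]
    by (intro AE_le_if_nn_integral_le[OF dist_meas bound_meas]) (simp_all add: coupling_cost_def bound_def)
  then have AE_pair: "AE u in \<mu> \<Otimes>\<^sub>M \<nu>. dist (fst u) (snd u) = dist (fst u) z + dist z (snd u)"
    by eventually_elim (rule dist_eq_add_if_two_powr_le[OF p], simp add: bound_def)
  have pred: "{u \<in> space (\<mu> \<Otimes>\<^sub>M \<nu>). dist (fst u) (snd u) = dist (fst u) z + dist z (snd u)}
      \<in> sets (\<mu> \<Otimes>\<^sub>M \<nu>)"
    unfolding sets_eq_imp_space_eq[OF sets] sets by measurable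
  have "AE x in \<mu>. AE y in \<nu>. dist x y = dist x z + dist z y"
    using AE_pair by (subst P.AE_pair_iff[OF pred])
  then show ?thesis
    by (subst (asm) P.AE_commute[OF pred])
qed

lemma return_not_wasserstein_midpoint:
  fixes \<mu> \<nu> :: "'a::{real_inner, second_countable_topology} measure"
  assumes p: "1 \<le> p" and \<mu>: "\<mu> \<in> wasserstein_space p" and \<nu>: "\<nu> \<in> wasserstein_space p"
    and below: "\<not> (AE x in \<mu>. inner (x - x0) w \<le> 0)" and above: "\<not> (AE x in \<mu>. 0 \<le> inner (x - x0) w)"
    and T: "0 < T" and \<mu>_x0: "wasserstein_dist p (return borel x0) \<mu> = T"
    and \<nu>_x0: "wasserstein_dist p (return borel x0) \<nu> = T" and \<mu>_\<nu>: "wasserstein_dist p \<mu> \<nu> = 2 * T"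
  shows False
proof -
  have moment_\<mu>: "moment p x0 \<mu> = ennreal (T powr p)"
    using moment_eq_wasserstein_dist_return[OF p \<mu>] \<mu>_x0 by simp
  have moment_\<nu>: "moment p x0 \<nu> = ennreal (T powr p)"
    using moment_eq_wasserstein_dist_return[OF p \<nu>] \<nu>_x0 by simp
  have "\<not> (AE y in \<nu>. y = x0)"
  proof
    assume "AE y in \<nu>. y = x0"
    then have "moment p x0 \<nu> = 0"
      unfolding moment_def by (auto intro: nn_integral_cong_AE[THEN trans] elim: eventually_mono)
    with moment_\<nu> T show False
      by simp
  qed
  moreover have "AE y in \<nu>. AE x in \<mu>. dist x y = dist x x0 + dist x0 y"
    using T by (intro AE_dist_eq_add_if_wasserstein_dist_eq[OF p \<mu> \<nu> _ moment_\<mu> moment_\<nu> \<mu>_\<nu>]) simp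
  ultimately obtain y where y: "y \<noteq> x0" and AE_y: "AE x in \<mu>. dist x y = dist x x0 + dist x0 y"
    by (metis (mono_tags, lifting) eventually_mono)
  show False
  proof (cases "0 \<le> inner (x0 - y) w")
    case True
    have "AE x in \<mu>. 0 \<le> inner (x - x0) w"
      using AE_y by eventually_elim (rule inner_nonneg_if_dist_eq_add[OF _ y True])
    with above show False ..
  next
    case False
    then have neg_w: "0 \<le> inner (x0 - y) (- w)"
      by simp
    have "AE x in \<mu>. inner (x - x0) w \<le> 0"
      using AE_y by eventually_elim (use inner_nonneg_if_dist_eq_add[OF _ y neg_w] in simp)
    with below show False ..
  qed
qed

lemma no_wgeodesic_ray_through_return:
  fixes \<gamma> :: "real \<Rightarrow> 'a::{real_inner, second_countable_topology} measure"
  assumes p: "1 \<le> p" and \<gamma>: "wgeodesic p {0..} \<gamma>" and T: "0 < T" "\<gamma> T = return borel x0"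
    and below: "\<not> (AE x in \<gamma> 0. inner (x - x0) w \<le> 0)" and above: "\<not> (AE x in \<gamma> 0. 0 \<le> inner (x - x0) w)"
  shows False
proof -
  have mem: "\<And>t. 0 \<le> t \<Longrightarrow> \<gamma> t \<in> wasserstein_space p"
    and dist: "\<And>s t. 0 \<le> s \<Longrightarrow> 0 \<le> t \<Longrightarrow> wasserstein_dist p (\<gamma> s) (\<gamma> t) = \<bar>s - t\<bar>"
    using \<gamma> unfolding wgeodesic_def by auto
  have "wasserstein_dist p (return borel x0) (\<gamma> 0) = T"
    using dist[of T 0] T by simp
  moreover have "wasserstein_dist p (return borel x0) (\<gamma> (2 * T)) = T"
    using dist[of T "2 * T"] T by simp
  moreover have "wasserstein_dist p (\<gamma> 0) (\<gamma> (2 * T)) = 2 * T"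
    using dist[of 0 "2 * T"] T by simp
  ultimately show False
    using T(1) mem[of 0] mem[of "2 * T"]
    by (intro return_not_wasserstein_midpoint[OF p _ _ below above]) simp_all
qed

lemma wgeodesic_distr_dilation_contraction:
  fixes \<rho> :: "'a::{real_normed_vector, second_countable_topology} measure"
  assumes \<rho>: "\<rho> \<in> wasserstein_space p" and p: "1 \<le> p"
    and T: "0 < T" "moment p x \<rho> = ennreal (T powr p)"
  shows "wgeodesic p {0..T} (\<lambda>t. distr \<rho> borel (dilation x (1 - t / T)))"
  unfolding wgeodesic_def
proof safe
  fix t
  assume "t \<in> {0..T}"
  then have "0 \<le> 1 - t / T"
    using T by simp
  then show "distr \<rho> borel (dilation x (1 - t / T)) \<in> wasserstein_space p"
    by (rule distr_dilation_in_wasserstein_space[OF \<rho> p])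
next
  fix s t
  assume "s \<in> {0..T}" "t \<in> {0..T}"
  then have "wasserstein_dist p (distr \<rho> borel (dilation x (1 - s / T))) (distr \<rho> borel (dilation x (1 - t / T)))
      = \<bar>(1 - s / T) - (1 - t / T)\<bar> * T"
    using T by (intro wasserstein_dist_distr_dilation[OF \<rho> p _ T(2)]) simp_all
  also have "\<dots> = \<bar>s - t\<bar>"
    using T by (simp add: abs_if field_simps)
  finally show "wasserstein_dist p (distr \<rho> borel (dilation x (1 - s / T))) (distr \<rho> borel (dilation x (1 - t / T)))
      = \<bar>s - t\<bar>" .
qed

lemma exists_wgeodesic_not_extendable:
  fixes \<mu> :: "'a::{real_inner, second_countable_topology} measure"
  assumes p: "1 \<le> p" and \<mu>: "\<mu> \<in> wasserstein_space p" and nd: "\<nexists>x. \<mu> = return borel x"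
  shows "\<exists>T \<gamma>. 0 < T \<and> wgeodesic p {0..T} \<gamma> \<and> \<gamma> 0 = \<mu> \<and>
    \<not> (\<exists>\<gamma>'. wgeodesic p {0..} \<gamma>' \<and> (\<forall>t\<in>{0..T}. \<gamma>' t = \<gamma> t))"
proof -
  note \<mu>D = wasserstein_spaceD[OF \<mu>]
  obtain w x0 where below: "\<not> (AE x in \<mu>. inner (x - x0) w \<le> 0)"
    and above: "\<not> (AE x in \<mu>. 0 \<le> inner (x - x0) w)"
    using exists_halfspaces_not_AE[OF \<mu> p nd] by blast
  define T where "T = wasserstein_dist p (return borel x0) \<mu>"
  have moment: "moment p x0 \<mu> = ennreal (T powr p)"
    unfolding T_def by (rule moment_eq_wasserstein_dist_return[OF p \<mu>])
  have "T \<noteq> 0"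
  proof
    assume "T = 0"
    then have "AE x in \<mu>. dist x0 x = 0"
      using moment p \<mu>D(2)
      by (intro AE_eq_0_if_nn_integral_powr_eq_0) (simp_all add: moment_def borel_measurable_sets_borel)
    then have "AE x in \<mu>. inner (x - x0) w \<le> 0"
      by eventually_elim simp
    with below show False ..
  qed
  then have T: "0 < T"
    by (simp add: T_def wasserstein_dist_optimal_cost)
  define \<gamma> where "\<gamma> t = distr \<mu> borel (dilation x0 (1 - t / T))" for t
  have "wgeodesic p {0..T} \<gamma>"
    unfolding \<gamma>_def by (rule wgeodesic_distr_dilation_contraction[OF \<mu> p T moment])
  moreover have \<gamma>0: "\<gamma> 0 = \<mu>"
    by (simp add: \<gamma>_def distr_id2 \<mu>D(2))
  moreover have "\<not> (\<exists>\<gamma>'. wgeodesic p {0..} \<gamma>' \<and> (\<forall>t\<in>{0..T}. \<gamma>' t = \<gamma> t))"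
  proof
    assume "\<exists>\<gamma>'. wgeodesic p {0..} \<gamma>' \<and> (\<forall>t\<in>{0..T}. \<gamma>' t = \<gamma> t)"
    then obtain \<gamma>' where \<gamma>': "wgeodesic p {0..} \<gamma>'" and agree: "\<forall>t\<in>{0..T}. \<gamma>' t = \<gamma> t"
      by blast
    have \<gamma>'0: "\<gamma>' 0 = \<mu>" and \<gamma>'T: "\<gamma>' T = return borel x0"
      using agree \<gamma>0 T by (auto simp: \<gamma>_def prob_space.distr_const[OF \<mu>D(1)])
    show False
      using below above by (rule no_wgeodesic_ray_through_return[OF p \<gamma>' T \<gamma>'T, unfolded \<gamma>'0])
  qed
  ultimately show ?thesis
    using T by blast
qed

theorem lemma3p4:
  fixes \<mu> :: "('a::{real_inner, complete_space, second_countable_topology}) measure"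
    and p :: real
  assumes dim2: "\<exists>u v::'a. u \<noteq> v \<and> independent {u, v}"
    and p: "1 < p"
    and mu: "\<mu> \<in> wasserstein_space p"
  shows "(\<exists>x. \<mu> = return borel x) \<longleftrightarrow>
         (\<forall>T \<gamma>. T > 0 \<and> wgeodesic p {0..T} \<gamma> \<and> \<gamma> 0 = \<mu> \<longrightarrow>
            (\<exists>\<gamma>'. wgeodesic p {0..} \<gamma>' \<and> (\<forall>t\<in>{0..T}. \<gamma>' t = \<gamma> t)))"
proof -
  have p1: "1 \<le> p"
    using p by simp
  show ?thesis
    using wgeodesic_from_return_extends[OF p1] exists_wgeodesic_not_extendable[OF p1 mu] by metis
qed

end
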